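(* In the setting below, assume consistency, positivity and no unmeasured confounders. Fix $a\in\{0,1\}$ and, for $j=1,\ldots,p$, let the causal estimand $\theta_{aj}$ be the solution of $M_j(\theta):=\mathbb E[F_j(Y_j(a),\theta)]=0$, where each $M_j$ is differentiable and there are constants $c,\delta>0$ with $\min_{1\le j\le p}\inf_{\theta\in\mathcal B(\theta_{aj},\delta)}|M_j'(\theta)|\ge c$. Suppose $F_j(\tilde Y_j(a),\theta)$ is asymptotically unbiased for $F_j(Y_j(a),\theta)$, i.e., with $\Delta_{mj}(a,\theta)=\mathbb E[F_j(\tilde Y_j(a),\theta)\mid\mathbf S(a),\mathbf W]-F_j(Y_j(a),\theta)$, one has $\delta_m:=\max_{j\in[p]}\sup_{\theta\in\mathcal B(\theta_{aj},\delta)}|\mathbb E[\Delta_{mj}(a,\theta)]|=o(1)$ as $m\to\infty$. Let $\tilde\theta_{aj}\in\mathcal B(\theta_{aj},\delta)$ be a solution of $\mathbb E[\mathbb E[F_j(\tilde Y_j,\theta)\mid A=a,\mathbf W]]=0$. Then $\theta_{aj}$ is identified by $\tilde\theta_{aj}$ as $m\to\infty$, in the sense that $\tilde\theta_{aj}-\theta_{aj}\to 0$ as $m\to\infty$.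
   Context: Setting. $(A,\mathbf W,\mathbf S(0),\mathbf S(1),\mathbf X(0),\mathbf X(1))$ is drawn from a super-population, $A\in\{0,1\}$ treatment, $\mathbf W\in\mathbb R^q$ covariates, $\mathbf S(a)\in\mathbb R^\ell$ latent potential state, $\mathbf X(a)=[\mathbf X_1(a),\ldots,\mathbf X_m(a)]^\top\in\mathbb R^{m\times d}$ potential responses with rows conditionally i.i.d. given $(\mathbf S(a),\mathbf W)$. Potential outcome $\mathbf Y(a)=\mathbb E[f(\mathbf X_1(a))\mid\mathbf S(a),\mathbf W]\in\mathbb R^p$ for a prespecified $f$; derived outcome $\tilde{\mathbf Y}(a)=g(\mathbf X(a))$ and $\tilde{\mathbf Y}=g(\mathbf X)$ for prespecified $g$. Consistency: $\mathbf X=A\mathbf X(1)+(1-A)\mathbf X(0)$. Positivity: $\mathbb P(A=a\mid\mathbf W)\in(0,1)$. No unmeasured confounders: $A\perp\mathbf X(a)\mid\mathbf W$. $F_j:\mathbb R\times\mathbb R\to\mathbb R$ are given estimating functions; $\mathcal B(x,r)$ is the closed ball of radius $r$ around $x$. *)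

theory Defs
  imports "HOL-Probability.Probability"
begin

definition sigma_gen :: "'o measure \<Rightarrow> ('o \<Rightarrow> 'b::topological_space) \<Rightarrow> 'o measure" where
  "sigma_gen M X = vimage_algebra (space M) X borel"

definition sigma_gen_seq :: "'o measure \<Rightarrow> (nat \<Rightarrow> 'o \<Rightarrow> 'b::topological_space) \<Rightarrow> 'o measure" where
  "sigma_gen_seq M X = sigma (space M) (\<Union>i. {X i -` B \<inter> space M | B. B \<in> sets borel})"

definition cprob :: "'o measure \<Rightarrow> 'o measure \<Rightarrow> 'o set \<Rightarrow> 'o \<Rightarrow> real" where
  "cprob M G E = real_cond_exp M G (indicator E)"

definition cond_indep :: "'o measure \<Rightarrow> 'o measure \<Rightarrow> 'o measure \<Rightarrow> 'o measure \<Rightarrow> bool" where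
  "cond_indep M F1 F2 G \<longleftrightarrow>
     (\<forall>E\<in>sets F1. \<forall>B\<in>sets F2. AE \<omega> in M.
        cprob M G (E \<inter> B) \<omega> = cprob M G E \<omega> * cprob M G B \<omega>)"

definition cond_iid_seq :: "'o measure \<Rightarrow> (nat \<Rightarrow> 'o \<Rightarrow> 'd::topological_space) \<Rightarrow> 'o measure \<Rightarrow> bool" where
  "cond_iid_seq M X G \<longleftrightarrow>
     (\<forall>I B. finite I \<longrightarrow> (\<forall>i\<in>I. B i \<in> sets borel) \<longrightarrow>
        (AE \<omega> in M. cprob M G (\<Inter>i\<in>I. X i -` B i \<inter> space M) \<omega>
                     = (\<Prod>i\<in>I. cprob M G (X 0 -` B i \<inter> space M) \<omega>)))"

text \<open>E[Z | E, W] as a random variable: E[Z 1_E | W] / P(E | W).\<close>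
definition cexp_event_W :: "'o measure \<Rightarrow> 'o set \<Rightarrow> ('o \<Rightarrow> 'w::topological_space) \<Rightarrow> ('o \<Rightarrow> real) \<Rightarrow> 'o \<Rightarrow> real" where
  "cexp_event_W M E W Z \<omega> =
     real_cond_exp M (sigma_gen M W) (\<lambda>x. Z x * indicator E x) \<omega> / cprob M (sigma_gen M W) E \<omega>"

text \<open>Potential outcome Y_j(b) = E[f_j(X_1(b)) | S(b), W] (row 1 is index 0).\<close>
definition Ypot :: "'o measure \<Rightarrow> (nat \<Rightarrow> 'o \<Rightarrow> 'l::topological_space) \<Rightarrow> ('o \<Rightarrow> 'w::topological_space)
    \<Rightarrow> (nat \<Rightarrow> nat \<Rightarrow> 'o \<Rightarrow> 'd) \<Rightarrow> ('d \<Rightarrow> 'p \<Rightarrow> real) \<Rightarrow> nat \<Rightarrow> 'p \<Rightarrow> 'o \<Rightarrow> real" where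
  "Ypot M S W Xpot f b j = real_cond_exp M (sigma_gen M (\<lambda>\<omega>. (S b \<omega>, W \<omega>))) (\<lambda>\<omega>. f (Xpot b 0 \<omega>) j)"

end

theory Submission
  imports Defs
begin

text \<open>By consistency, on the event \<open>A = a\<close> the observed derived outcome is \<open>g\<close> applied to
  the potential rows \<open>X(a)\<close>; no unmeasured confounding lets the indicator of that event be
  pulled out of the conditional expectation given \<open>W\<close> as \<open>P(A = a | W)\<close>, which positivity
  allows us to divide by. So the defining equation of \<open>\<theta>t\<close> says \<open>E[F_j(Y~_j(a), \<theta>t)] = 0\<close>,
  and by the tower property \<open>M_j(\<theta>t)\<close> is minus the bias \<open>E[\<Delta>_mj(a, \<theta>t)]\<close>, which tends
  to 0. The mean value theorem with \<open>|M_j'| \<ge> c\<close> on the ball then gives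
  \<open>|\<theta>t - \<theta>a| \<le> |M_j(\<theta>t)| / c\<close>.\<close>

lemma finite_measure_subalgebra_sigma_gen:
  assumes "finite_measure M" and "X \<in> borel_measurable M"
  shows "finite_measure_subalgebra M (sigma_gen M X)"
proof -
  interpret finite_measure M by fact
  have "subalgebra M (sigma_gen M X)"
    unfolding subalgebra_def sigma_gen_def using assms(2)
    by (auto simp: sets_vimage_algebra intro!: sets.sigma_sets_subset measurable_sets)
  then show ?thesis by unfold_locales
qed

lemma borel_measurable_sigma_gen: "X \<in> borel_measurable (sigma_gen M X)"
  unfolding sigma_gen_def by (rule measurable_vimage_algebra1) simp

lemma
  shows space_sigma_gen_seq [simp]: "space (sigma_gen_seq M X) = space M"
    and sets_sigma_gen_seq:
      "sets (sigma_gen_seq M X) = sigma_sets (space M) (\<Union>i. {X i -` B \<inter> space M | B. B \<in> sets borel})"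
  unfolding sigma_gen_seq_def by (auto intro!: space_measure_of sets_measure_of)

lemma finite_measure_subalgebra_sigma_gen_seq:
  assumes "finite_measure M" and "\<And>i. X i \<in> borel_measurable M"
  shows "finite_measure_subalgebra M (sigma_gen_seq M X)"
proof -
  interpret finite_measure M by fact
  have "subalgebra M (sigma_gen_seq M X)"
    unfolding subalgebra_def sets_sigma_gen_seq using assms(2)
    by (auto intro!: sets.sigma_sets_subset measurable_sets)
  then show ?thesis by unfold_locales
qed

lemma borel_measurable_sigma_gen_seq: "X i \<in> borel_measurable (sigma_gen_seq M X)"
  by (rule measurableI) (auto simp: sets_sigma_gen_seq)

lemma integrable_real_mult_bounded:
  fixes q Z :: "'a \<Rightarrow> real"
  assumes "integrable M Z" and "q \<in> borel_measurable M" and "AE x in M. \<bar>q x\<bar> \<le> 1"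
  shows "integrable M (\<lambda>x. q x * Z x)"
proof (rule Bochner_Integration.integrable_bound[OF assms(1)])
  show "AE x in M. norm (q x * Z x) \<le> norm (Z x)"
    using assms(3) by eventually_elim (simp add: abs_mult mult_left_le_one_le)
qed (use assms in auto)

context finite_measure_subalgebra
begin

lemma borel_measurable_cprob [measurable]:
  "cprob M F E \<in> borel_measurable F" "cprob M F E \<in> borel_measurable M"
  unfolding cprob_def by simp_all

lemma integrable_cprob: "E \<in> sets M \<Longrightarrow> integrable M (cprob M F E)"
  unfolding cprob_def
  by (intro real_cond_exp_int(1) integrable_real_indicator) (auto simp: emeasure_eq_measure)

lemma cprob_bounds: "E \<in> sets M \<Longrightarrow> AE x in M. 0 \<le> cprob M F E x \<and> cprob M F E x \<le> 1"
  unfolding cprob_def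
  by (intro AE_conjI real_cond_exp_pos real_cond_exp_le_c integrable_real_indicator)
     (auto simp: indicator_def emeasure_eq_measure)

lemma set_integral_indicator_cond_indep:
  assumes ci: "cond_indep M F1 H F" and E: "E \<in> sets F1" "E \<in> sets M"
    and H: "subalgebra M H" and C: "C \<in> sets F" and B: "B \<in> sets H"
  shows "(\<integral>x\<in>B. (indicator C x * indicator E x :: real) \<partial>M)
       = (\<integral>x\<in>B. indicator C x * cprob M F E x \<partial>M)"
proof -
  have [measurable]: "C \<in> sets F" "E \<in> sets M" by fact+
  have [measurable]: "C \<in> sets M" using C subalg by (auto simp: subalgebra_def)
  have [measurable]: "B \<in> sets M" using B H by (auto simp: subalgebra_def)
  have "(\<integral>x\<in>B. indicator C x * indicator E x \<partial>M)
      = (\<integral>x. (indicator C x * indicator (E \<inter> B) x :: real) \<partial>M)"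
    unfolding set_lebesgue_integral_def
    by (intro Bochner_Integration.integral_cong) (auto simp: indicator_def)
  also have "\<dots> = (\<integral>x. indicator C x * cprob M F (E \<inter> B) x \<partial>M)"
    unfolding cprob_def
    by (rule real_cond_exp_intg(2)[symmetric])
       (auto intro!: integrable_real_mult_indicator simp: emeasure_eq_measure)
  also have "\<dots> = (\<integral>x. (indicator C x * cprob M F E x) * cprob M F B x \<partial>M)"
  proof (rule integral_cong_AE)
    have "AE x in M. cprob M F (E \<inter> B) x = cprob M F E x * cprob M F B x"
      using ci E B unfolding cond_indep_def by blast
    then show "AE x in M. indicator C x * cprob M F (E \<inter> B) x
                        = indicator C x * cprob M F E x * cprob M F B x"
      by eventually_elim simp
  qed simp_all
  also have "\<dots> = (\<integral>x. (indicator C x * cprob M F E x) * indicator B x \<partial>M)"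
    unfolding cprob_def[of M F B]
    by (rule real_cond_exp_intg(2))
       (use integrable_mult_indicator[OF _ integrable_mult_indicator[OF _ integrable_cprob]] in
        \<open>auto simp: mult_ac\<close>)
  finally show ?thesis
    unfolding set_lebesgue_integral_def by (simp add: mult_ac)
qed

lemma real_cond_exp_indicator_cond_indep:
  assumes ci: "cond_indep M F1 H F" and E: "E \<in> sets F1" "E \<in> sets M"
    and H: "subalgebra M H" and C: "C \<in> sets F"
  shows "AE x in M. real_cond_exp M H (\<lambda>x. indicator C x * indicator E x) x
                  = real_cond_exp M H (\<lambda>x. indicator C x * cprob M F E x) x"
proof -
  interpret H: finite_measure_subalgebra M H by unfold_locales (rule H)
  have [measurable]: "C \<in> sets M" using C subalg by (auto simp: subalgebra_def)
  have int_q: "integrable M (\<lambda>x. indicator C x * cprob M F E x)"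
    using integrable_mult_indicator[OF _ integrable_cprob[OF E(2)]] by simp
  show ?thesis
  proof (rule H.real_cond_exp_charact)
    fix B assume "B \<in> sets H"
    then show "(\<integral>x\<in>B. indicator C x * indicator E x \<partial>M)
             = (\<integral>x\<in>B. real_cond_exp M H (\<lambda>x. indicator C x * cprob M F E x) x \<partial>M)"
      using set_integral_indicator_cond_indep[OF ci E H C] H.real_cond_exp_intA[OF int_q] by simp
  qed (use int_q E(2) in \<open>auto intro!: integrable_real_mult_indicator simp: emeasure_eq_measure\<close>)
qed

lemma integral_indicator_mult_cond_indep:
  assumes ci: "cond_indep M F1 H F" and E: "E \<in> sets F1" "E \<in> sets M"
    and H: "subalgebra M H" and C: "C \<in> sets F"
    and Z: "Z \<in> borel_measurable H" "integrable M Z"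
  shows "(\<integral>x. indicator C x * (Z x * indicator E x) \<partial>M)
       = (\<integral>x. indicator C x * (cprob M F E x * Z x) \<partial>M)"
proof -
  interpret H: finite_measure_subalgebra M H by unfold_locales (rule H)
  have [measurable]: "C \<in> sets M" "E \<in> sets M" using C E(2) subalg by (auto simp: subalgebra_def)
  have [measurable]: "Z \<in> borel_measurable H" "Z \<in> borel_measurable M"
    using Z by auto
  let ?q = "\<lambda>x. indicator C x * cprob M F E x"
  have "AE x in M. \<bar>?q x\<bar> \<le> 1"
    using cprob_bounds[OF E(2)] by eventually_elim (auto simp: indicator_def)
  then have int_Zq: "integrable M (\<lambda>x. Z x * ?q x)"
    using integrable_real_mult_bounded[OF Z(2), of ?q] by (simp add: mult.commute)
  have int_ZCE: "integrable M (\<lambda>x. Z x * (indicator C x * indicator E x))"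
    using integrable_real_mult_bounded[OF Z(2), of "\<lambda>x. indicator C x * indicator E x"]
    by (simp add: mult.commute indicator_def)
  have "(\<integral>x. indicator C x * (Z x * indicator E x) \<partial>M)
      = (\<integral>x. Z x * (indicator C x * indicator E x) \<partial>M)"
    by (simp add: mult_ac)
  also have "\<dots> = (\<integral>x. Z x * real_cond_exp M H (\<lambda>x. indicator C x * indicator E x) x \<partial>M)"
    by (rule H.real_cond_exp_intg(2)[symmetric]) (use int_ZCE in auto)
  also have "\<dots> = (\<integral>x. Z x * real_cond_exp M H ?q x \<partial>M)"
    using real_cond_exp_indicator_cond_indep[OF ci E H C]
    by (intro integral_cong_AE) (auto elim!: AE_mp)
  also have "\<dots> = (\<integral>x. Z x * ?q x \<partial>M)"
    by (rule H.real_cond_exp_intg(2)) (use int_Zq in auto)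
  finally show ?thesis by (simp add: mult_ac)
qed

theorem real_cond_exp_mult_indicator_cond_indep:
  assumes ci: "cond_indep M F1 H F" and E: "E \<in> sets F1" "E \<in> sets M"
    and H: "subalgebra M H" and Z: "Z \<in> borel_measurable H" "integrable M Z"
  shows "AE x in M. real_cond_exp M F (\<lambda>x. Z x * indicator E x) x
                  = cprob M F E x * real_cond_exp M F Z x"
proof -
  have [measurable]: "E \<in> sets M" "Z \<in> borel_measurable M" using E Z by auto
  have cprob_abs: "AE x in M. \<bar>cprob M F E x\<bar> \<le> 1"
    using cprob_bounds[OF E(2)] by auto
  show ?thesis
  proof (rule real_cond_exp_charact)
    fix C assume C: "C \<in> sets F"
    then have [measurable]: "C \<in> sets F" "C \<in> sets M" using subalg by (auto simp: subalgebra_def)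
    have "(\<integral>x\<in>C. cprob M F E x * real_cond_exp M F Z x \<partial>M)
        = (\<integral>x. (indicator C x * cprob M F E x) * real_cond_exp M F Z x \<partial>M)"
      unfolding set_lebesgue_integral_def by (simp add: mult_ac)
    also have "\<dots> = (\<integral>x. (indicator C x * cprob M F E x) * Z x \<partial>M)"
      using cprob_abs
      by (intro real_cond_exp_intg(2) integrable_real_mult_bounded Z)
         (auto simp: indicator_def elim!: AE_mp)
    also have "\<dots> = (\<integral>x\<in>C. Z x * indicator E x \<partial>M)"
      using integral_indicator_mult_cond_indep[OF ci E H C Z]
      unfolding set_lebesgue_integral_def by (simp add: mult_ac)
    finally show "(\<integral>x\<in>C. Z x * indicator E x \<partial>M)
                = (\<integral>x\<in>C. cprob M F E x * real_cond_exp M F Z x \<partial>M)" by simp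
  next
    show "integrable M (\<lambda>x. Z x * indicator E x)"
      using integrable_mult_indicator[OF E(2) Z(2)] by (simp add: mult.commute)
    show "integrable M (\<lambda>x. cprob M F E x * real_cond_exp M F Z x)"
      using cprob_abs by (intro integrable_real_mult_bounded real_cond_exp_int(1) Z) auto
  qed (simp add: cprob_def)
qed

end

lemma integral_cexp_event_W_cond_indep:
  assumes "prob_space M" and W: "W \<in> borel_measurable M"
    and ci: "cond_indep M F1 H (sigma_gen M W)" and E: "E \<in> sets F1" "E \<in> sets M"
    and H: "subalgebra M H"
    and pos: "AE \<omega> in M. 0 < cprob M (sigma_gen M W) E \<omega>"
    and Z: "Z \<in> borel_measurable M" and Z': "Z' \<in> borel_measurable H" "integrable M Z'"
    and eq_on_E: "\<And>\<omega>. \<omega> \<in> E \<Longrightarrow> Z \<omega> = Z' \<omega>"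
  shows "(\<integral>\<omega>. cexp_event_W M E W Z \<omega> \<partial>M) = (\<integral>\<omega>. Z' \<omega> \<partial>M)"
proof -
  interpret prob_space M by fact
  interpret G: finite_measure_subalgebra M "sigma_gen M W"
    by (rule finite_measure_subalgebra_sigma_gen[OF _ W]) unfold_locales
  have [measurable]: "E \<in> sets M" "Z \<in> borel_measurable M" "Z' \<in> borel_measurable M"
    using E Z Z' by auto
  have "AE \<omega> in M. real_cond_exp M (sigma_gen M W) (\<lambda>x. Z x * indicator E x) \<omega>
                  = real_cond_exp M (sigma_gen M W) (\<lambda>x. Z' x * indicator E x) \<omega>"
    by (rule G.real_cond_exp_cong) (auto simp: eq_on_E indicator_def)
  moreover have "AE \<omega> in M. real_cond_exp M (sigma_gen M W) (\<lambda>x. Z' x * indicator E x) \<omega>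
      = cprob M (sigma_gen M W) E \<omega> * real_cond_exp M (sigma_gen M W) Z' \<omega>"
    by (rule G.real_cond_exp_mult_indicator_cond_indep[OF ci E H Z'])
  ultimately have "AE \<omega> in M. cexp_event_W M E W Z \<omega> = real_cond_exp M (sigma_gen M W) Z' \<omega>"
    using pos by eventually_elim (simp add: cexp_event_W_def)
  then have "(\<integral>\<omega>. cexp_event_W M E W Z \<omega> \<partial>M) = (\<integral>\<omega>. real_cond_exp M (sigma_gen M W) Z' \<omega> \<partial>M)"
    by (rule integral_cong_AE[rotated 2]) (auto simp: cexp_event_W_def cprob_def)
  also have "\<dots> = (\<integral>\<omega>. Z' \<omega> \<partial>M)"
    by (rule G.real_cond_exp_int(2)[OF Z'(2)])
  finally show ?thesis .
qed

lemma integral_cexp_event_W_potential_outcome: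
  fixes A :: "'o \<Rightarrow> nat" and Xpot :: "nat \<Rightarrow> nat \<Rightarrow> 'o \<Rightarrow> 'd::euclidean_space"
    and X :: "nat \<Rightarrow> 'o \<Rightarrow> 'd"
  assumes "prob_space M" and A: "A \<in> measurable M (count_space UNIV)"
    and W: "W \<in> borel_measurable M" and Xpot: "\<And>b i. Xpot b i \<in> borel_measurable M"
    and consistency: "\<And>i \<omega>. \<omega> \<in> space M \<Longrightarrow>
          X i \<omega> = real (A \<omega>) *\<^sub>R Xpot 1 i \<omega> + (1 - real (A \<omega>)) *\<^sub>R Xpot 0 i \<omega>"
    and a: "a \<in> {0, 1}"
    and pos: "AE \<omega> in M. 0 < cprob M (sigma_gen M W) {x \<in> space M. A x = a} \<omega>"
    and ci: "cond_indep M (sigma_gen M A) (sigma_gen_seq M (Xpot a)) (sigma_gen M W)"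
    and h: "h \<in> borel_measurable (Pi\<^sub>M UNIV (\<lambda>_. borel))"
    and h_int: "integrable M (\<lambda>\<omega>. h (\<lambda>i. Xpot a i \<omega>))"
  shows "(\<integral>\<omega>. cexp_event_W M {x \<in> space M. A x = a} W (\<lambda>\<omega>. h (\<lambda>i. X i \<omega>)) \<omega> \<partial>M)
       = (\<integral>\<omega>. h (\<lambda>i. Xpot a i \<omega>) \<partial>M)"
proof (rule integral_cexp_event_W_cond_indep[OF assms(1) W ci])
  interpret prob_space M by fact
  have [measurable]: "A \<in> measurable M (count_space UNIV)" "\<And>b i. Xpot b i \<in> borel_measurable M"
    using A Xpot by auto
  have "A -` {a} \<inter> space (sigma_gen M A) \<in> sets (sigma_gen M A)"
    by (rule measurable_sets[OF borel_measurable_sigma_gen]) auto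
  then show "{x \<in> space M. A x = a} \<in> sets (sigma_gen M A)"
    by (simp add: sigma_gen_def vimage_def Int_def conj_commute)
  show "{x \<in> space M. A x = a} \<in> sets M" by measurable
  show "subalgebra M (sigma_gen_seq M (Xpot a))"
    using finite_measure_subalgebra_sigma_gen_seq[OF _ Xpot]
    by (simp add: finite_measure_axioms finite_measure_subalgebra.subalg)
  show "(\<lambda>\<omega>. h (\<lambda>i. Xpot a i \<omega>)) \<in> borel_measurable (sigma_gen_seq M (Xpot a))"
    by (intro measurable_compose[OF measurable_PiM_single' h] borel_measurable_sigma_gen_seq) auto
  have "X i \<in> borel_measurable M" for i
  proof -
    have "(\<lambda>\<omega>. real (A \<omega>) *\<^sub>R Xpot 1 i \<omega> + (1 - real (A \<omega>)) *\<^sub>R Xpot 0 i \<omega>)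
        \<in> borel_measurable M"
      by measurable
    then show ?thesis
      by (rule measurable_cong[THEN iffD1, rotated]) (simp add: consistency)
  qed
  then show "(\<lambda>\<omega>. h (\<lambda>i. X i \<omega>)) \<in> borel_measurable M"
    by (intro measurable_compose[OF measurable_PiM_single' h]) auto
  show "h (\<lambda>i. X i \<omega>) = h (\<lambda>i. Xpot a i \<omega>)" if "\<omega> \<in> {x \<in> space M. A x = a}" for \<omega>
    using that a consistency by auto
qed fact+

lemma abs_diff_le_of_abs_deriv_ge:
  fixes h :: "real \<Rightarrow> real"
  assumes diff: "\<And>t. h differentiable (at t)"
    and bound: "\<And>t. t \<in> cball x0 r \<Longrightarrow> c \<le> \<bar>deriv h t\<bar>"
    and y: "y \<in> cball x0 r"
  shows "c * \<bar>y - x0\<bar> \<le> \<bar>h y - h x0\<bar>"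
proof -
  have deriv: "\<And>t. DERIV h t :> deriv h t"
    using diff DERIV_deriv_iff_real_differentiable by blast
  have between: "c \<le> \<bar>deriv h z\<bar>" if "min x0 y < z" "z < max x0 y" for z
    using y that by (intro bound) (auto simp: dist_real_def)
  show ?thesis
  proof (cases y x0 rule: linorder_cases)
    case less
    then obtain z where "y < z" "z < x0" "h x0 - h y = (x0 - y) * deriv h z"
      using MVT2[OF less deriv] by blast
    with between[of z] less show ?thesis
      by (simp add: abs_mult abs_minus_commute mult.commute mult_right_mono)
  next
    case greater
    then obtain z where "x0 < z" "z < y" "h y - h x0 = (y - x0) * deriv h z"
      using MVT2[OF greater deriv] by blast
    with between[of z] greater show ?thesis
      by (simp add: abs_mult mult.commute mult_right_mono)
  qed simp
qed

lemma tendsto_of_abs_deriv_ge: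
  fixes h :: "real \<Rightarrow> real"
  assumes diff: "\<And>t. h differentiable (at t)"
    and bound: "\<And>t. t \<in> cball x0 r \<Longrightarrow> c \<le> \<bar>deriv h t\<bar>" and c: "c > 0"
    and root: "h x0 = 0" and y: "\<And>m. y m \<in> cball x0 r"
    and lim: "(\<lambda>m. h (y m)) \<longlonglongrightarrow> 0"
  shows "(\<lambda>m. y m - x0) \<longlonglongrightarrow> 0"
proof (rule Lim_null_comparison)
  show "\<forall>\<^sub>F m in sequentially. norm (y m - x0) \<le> \<bar>h (y m)\<bar> / c"
    using abs_diff_le_of_abs_deriv_ge[OF diff bound y] root c
    by (simp add: pos_le_divide_eq mult.commute)
  show "(\<lambda>m. \<bar>h (y m)\<bar> / c) \<longlonglongrightarrow> 0"
    using tendsto_divide_zero[OF tendsto_rabs_zero[OF lim]] .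
qed

lemma tendsto_zero_of_SUP_abs:
  fixes e :: "nat \<Rightarrow> 'j \<Rightarrow> 'b \<Rightarrow> real"
  assumes lim: "(\<lambda>m. SUP j. SUP \<theta>\<in>K j. ereal \<bar>e m j \<theta>\<bar>) \<longlonglongrightarrow> 0"
    and in_K: "\<And>m. \<theta> m \<in> K j"
  shows "(\<lambda>m. e m j (\<theta> m)) \<longlonglongrightarrow> 0"
proof -
  have "ereal \<bar>e m j (\<theta> m)\<bar> \<le> (SUP j. SUP \<theta>\<in>K j. ereal \<bar>e m j \<theta>\<bar>)" for m
  proof -
    have "ereal \<bar>e m j (\<theta> m)\<bar> \<le> (SUP \<theta>\<in>K j. ereal \<bar>e m j \<theta>\<bar>)"
      by (rule SUP_upper[OF in_K])
    also have "\<dots> \<le> (SUP j. SUP \<theta>\<in>K j. ereal \<bar>e m j \<theta>\<bar>)"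
      by (rule SUP_upper) simp
    finally show ?thesis .
  qed
  then have "(\<lambda>m. ereal \<bar>e m j (\<theta> m)\<bar>) \<longlonglongrightarrow> 0"
    by (intro tendsto_sandwich[OF _ _ tendsto_const lim]) auto
  then have "(\<lambda>m. \<bar>e m j (\<theta> m)\<bar>) \<longlonglongrightarrow> 0"
    by (simp add: zero_ereal_def)
  then show ?thesis
    by (rule tendsto_rabs_zero_cancel)
qed

theorem lemma4:
  fixes M :: "'o measure"
    and A :: "'o \<Rightarrow> nat"
    and W :: "'o \<Rightarrow> 'w::euclidean_space"
    and S :: "nat \<Rightarrow> 'o \<Rightarrow> 'l::euclidean_space"
    and Xpot :: "nat \<Rightarrow> nat \<Rightarrow> 'o \<Rightarrow> 'd::euclidean_space"
    and X :: "nat \<Rightarrow> 'o \<Rightarrow> 'd"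
    and f :: "'d \<Rightarrow> 'p::finite \<Rightarrow> real"
    and g :: "nat \<Rightarrow> (nat \<Rightarrow> 'd) \<Rightarrow> 'p \<Rightarrow> real"
    and F :: "'p \<Rightarrow> real \<Rightarrow> real \<Rightarrow> real"
    and a :: nat
    and \<theta>a :: "'p \<Rightarrow> real"
    and \<theta>t :: "nat \<Rightarrow> 'p \<Rightarrow> real"
    and c \<delta> :: real
  assumes P: "prob_space M"
    and A_meas: "A \<in> measurable M (count_space UNIV)"
    and A_bin: "\<forall>\<omega>\<in>space M. A \<omega> \<in> {0, 1}"
    and W_meas: "W \<in> borel_measurable M"
    and S_meas: "\<forall>b. S b \<in> borel_measurable M"
    and Xpot_meas: "\<forall>b i. Xpot b i \<in> borel_measurable M"
    and rows_iid: "\<forall>b\<in>{0,1}. cond_iid_seq M (Xpot b) (sigma_gen M (\<lambda>\<omega>. (S b \<omega>, W \<omega>)))"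
    and consistency: "\<forall>i. \<forall>\<omega>\<in>space M.
          X i \<omega> = real (A \<omega>) *\<^sub>R Xpot 1 i \<omega> + (1 - real (A \<omega>)) *\<^sub>R Xpot 0 i \<omega>"
    and positivity: "\<forall>b\<in>{0,1}. AE \<omega> in M.
          0 < cprob M (sigma_gen M W) {x \<in> space M. A x = b} \<omega> \<and>
          cprob M (sigma_gen M W) {x \<in> space M. A x = b} \<omega> < 1"
    and no_unmeasured_confounders:
          "\<forall>b\<in>{0,1}. cond_indep M (sigma_gen M A) (sigma_gen_seq M (Xpot b)) (sigma_gen M W)"
    and f_meas: "\<forall>j. (\<lambda>x. f x j) \<in> borel_measurable borel"
    and f_int: "\<forall>b j. integrable M (\<lambda>\<omega>. f (Xpot b 0 \<omega>) j)"
    and g_local: "\<forall>m x y. (\<forall>i<m. x i = y i) \<longrightarrow> g m x = g m y"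
    and g_meas: "\<forall>m j. (\<lambda>x. g m x j) \<in> borel_measurable (Pi\<^sub>M UNIV (\<lambda>_. borel))"
    and F_meas: "\<forall>j \<theta>. (\<lambda>y. F j y \<theta>) \<in> borel_measurable borel"
    and F_int_Y: "\<forall>j \<theta>. integrable M (\<lambda>\<omega>. F j (Ypot M S W Xpot f a j \<omega>) \<theta>)"
    and F_int_Ytil: "\<forall>m j \<theta>. integrable M (\<lambda>\<omega>. F j (g m (\<lambda>i. Xpot a i \<omega>) j) \<theta>)"
    and a01: "a \<in> {0, 1}"
    and estimand: "\<forall>j. (\<integral>\<omega>. F j (Ypot M S W Xpot f a j \<omega>) (\<theta>a j) \<partial>M) = 0 \<and>
          (\<forall>\<theta>. (\<integral>\<omega>. F j (Ypot M S W Xpot f a j \<omega>) \<theta> \<partial>M) = 0 \<longrightarrow> \<theta> = \<theta>a j)"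
    and M_diff: "\<forall>j \<theta>. (\<lambda>t. \<integral>\<omega>. F j (Ypot M S W Xpot f a j \<omega>) t \<partial>M) differentiable (at \<theta>)"
    and c_pos: "c > 0" and \<delta>_pos: "\<delta> > 0"
    and deriv_bound: "\<forall>j. \<forall>\<theta>\<in>cball (\<theta>a j) \<delta>.
          \<bar>deriv (\<lambda>t. \<integral>\<omega>. F j (Ypot M S W Xpot f a j \<omega>) t \<partial>M) \<theta>\<bar> \<ge> c"
    and asymp_unbiased:
          "(\<lambda>m. SUP j. SUP \<theta>\<in>cball (\<theta>a j) \<delta>.
              ereal \<bar>\<integral>\<omega>. (real_cond_exp M (sigma_gen M (\<lambda>\<omega>. (S a \<omega>, W \<omega>)))
                               (\<lambda>\<omega>. F j (g m (\<lambda>i. Xpot a i \<omega>) j) \<theta>) \<omega>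
                           - F j (Ypot M S W Xpot f a j \<omega>) \<theta>) \<partial>M\<bar>) \<longlonglongrightarrow> 0"
    and \<theta>t_ball: "\<forall>m j. \<theta>t m j \<in> cball (\<theta>a j) \<delta>"
    and \<theta>t_sol: "\<forall>m j. (\<integral>\<omega>. cexp_event_W M {x \<in> space M. A x = a} W
                         (\<lambda>\<omega>. F j (g m (\<lambda>i. X i \<omega>) j) (\<theta>t m j)) \<omega> \<partial>M) = 0"
  shows "\<forall>j. (\<lambda>m. \<theta>t m j - \<theta>a j) \<longlonglongrightarrow> 0"
proof (intro allI)
  fix j
  interpret prob_space M by (rule P)
  let ?Mj = "\<lambda>t. \<integral>\<omega>. F j (Ypot M S W Xpot f a j \<omega>) t \<partial>M"
  let ?SW = "sigma_gen M (\<lambda>\<omega>. (S a \<omega>, W \<omega>))"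
  let ?Z = "\<lambda>m t \<omega>. F j (g m (\<lambda>i. Xpot a i \<omega>) j) t"
  interpret SW: finite_measure_subalgebra M ?SW
    using S_meas[rule_format, of a] W_meas
    by (intro finite_measure_subalgebra_sigma_gen) (unfold_locales, measurable)
  have root: "(\<integral>\<omega>. ?Z m (\<theta>t m j) \<omega> \<partial>M) = 0" for m
  proof -
    have h_meas: "(\<lambda>x. F j (g m x j) (\<theta>t m j)) \<in> borel_measurable (Pi\<^sub>M UNIV (\<lambda>_. borel))"
      using measurable_compose[OF g_meas[rule_format] F_meas[rule_format]] .
    have pos: "AE \<omega> in M. 0 < cprob M (sigma_gen M W) {x \<in> space M. A x = a} \<omega>"
      using positivity a01 by auto
    show ?thesis
      using integral_cexp_event_W_potential_outcome[OF P A_meas W_meas Xpot_meas[rule_format]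
          consistency[rule_format] a01 pos no_unmeasured_confounders[rule_format, OF a01] h_meas
          F_int_Ytil[rule_format]] \<theta>t_sol
      by simp
  qed
  have "(\<lambda>m. \<integral>\<omega>. (real_cond_exp M ?SW (?Z m (\<theta>t m j)) \<omega>
                    - F j (Ypot M S W Xpot f a j \<omega>) (\<theta>t m j)) \<partial>M) \<longlonglongrightarrow> 0"
    by (rule tendsto_zero_of_SUP_abs[OF asymp_unbiased]) (use \<theta>t_ball in auto)
  moreover have "(\<integral>\<omega>. (real_cond_exp M ?SW (?Z m (\<theta>t m j)) \<omega>
                    - F j (Ypot M S W Xpot f a j \<omega>) (\<theta>t m j)) \<partial>M) = - ?Mj (\<theta>t m j)" for m
    using SW.real_cond_exp_int[OF F_int_Ytil[rule_format]] F_int_Y root by simp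
  ultimately have "(\<lambda>m. ?Mj (\<theta>t m j)) \<longlonglongrightarrow> 0"
    by (simp add: tendsto_minus_cancel_left[where y = 0, simplified, symmetric])
  then show "(\<lambda>m. \<theta>t m j - \<theta>a j) \<longlonglongrightarrow> 0"
    by (rule tendsto_of_abs_deriv_ge[rotated -1])
       (use M_diff deriv_bound c_pos estimand \<theta>t_ball in auto)
qed

end
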